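(* For all integers $B\ge2$ and $n\ge0$, $P_n(1,B)=(-1)^{n+1}p_n(1,B)$, where $$P_n(1,B)=\sum_{j=0}^{n}\binom nj\binom{n+j}n^{B}\binom{2n-j}n^{B}\Big[\Big(\frac n2-j\Big)\big((1+B)(H_{n-j}-H_j)+B(H_{n+j}-H_{2n-j})\big)-1\Big]$$ and $$p_n(1,B)=\sum_{0\le i_1\le\dots\le i_{B-1}\le n}(-1)^{i_{B-1}+i_{B-2}}\binom{3n+1}{n-i_{B-1}}\binom{n+i_{B-1}-i_{B-2}}{n}\binom{n+i_{B-1}}n\prod_{k=1}^{B-2}\binom n{i_k-i_{k-1}}\binom{2n-i_k}n\binom{n+i_k}n,$$ with $i_0=0$.
   Context: $H_m=\sum_{j=1}^m1/j$, $H_0=0$. Empty products equal $1$. *)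

theory Defs
  imports "HOL-Analysis.Analysis"
begin

text \<open>H_m is the library's harmonic number harm m (sum of 1/k for k = 1..m; harm 0 = 0).\<close>

definition bigP :: "nat \<Rightarrow> nat \<Rightarrow> real" where
  "bigP n B = (\<Sum>j = 0..n. real (n choose j) * real ((n + j) choose n) ^ B
      * real ((2*n - j) choose n) ^ B
      * ((real n / 2 - real j) * ((1 + real B) * (harm (n - j) - harm j)
            + real B * (harm (n + j) - harm (2*n - j))) - 1))"

text \<open>Index tuples (i_0, i_1, ..., i_{B-1}) with i_0 = 0 and
  0 <= i_1 <= ... <= i_{B-1} <= n, encoded as functions nat => nat that vanish
  outside {0..B-1}.\<close>
definition idx_tuples :: "nat \<Rightarrow> nat \<Rightarrow> (nat \<Rightarrow> nat) set" where
  "idx_tuples n B = {i. i 0 = 0 \<and> (\<forall>k\<in>{1..B-1}. i (k - 1) \<le> i k)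
      \<and> i (B - 1) \<le> n \<and> (\<forall>k\<ge>B. i k = 0)}"

definition smallp :: "nat \<Rightarrow> nat \<Rightarrow> int" where
  "smallp n B = (\<Sum>i\<in>idx_tuples n B.
      (-1) ^ (i (B - 1) + i (B - 2))
      * int ((3*n + 1) choose (n - i (B - 1)))
      * int ((n + i (B - 1) - i (B - 2)) choose n)
      * int ((n + i (B - 1)) choose n)
      * (\<Prod>k = 1..B - 2. int (n choose (i k - i (k - 1)))
            * int ((2*n - i k) choose n) * int ((n + i k) choose n)))"

end

(*
  Let Q(t) = binom(n+t, n) binom(2n-t, n), a polynomial of degree 2n, and let L be the functional
  L(N) = sum_{j=0..n} binom(n,j) (N'(j) + (H_{n-j} - H_j) N(j)) on real polynomials.  Then
  P_n(1,B) = -L((2t - n) Q^B) / 2.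

  L kills every multiple of pi_c(t) = prod_{i<c} (t - i)(t - n + i) with c > n, and a telescoping
  (summation by parts) argument evaluates it on (2t - n) pi_b.  Expanding Q pi_b in the basis
  pi_b, pi_{b+1}, ... (Newton interpolation in the variable t(n - t)) shows that the suitably
  normalised values z_M(b) of L((2t - n) pi_b Q^M) satisfy
    z_{M+1}(b) = sum_{c=b..n} binom(n, c-b) Q(c) z_M(c),
  with z_1(b) = (-1)^(n+b) and z_2(b) equal to the innermost sum of p_n(1,B).  Unrolling this
  recursion B - 2 times produces exactly the nested sum p_n(1,B), while z_B(0) = (-1)^(n+1) P_n(1,B).
*)
theory Submission
  imports Defs "HOL-Computational_Algebra.Polynomial"
begin

section \<open>Binomial sums\<close>

lemma choose_add_eq_gbinomial_neg:
  "real ((m + t) choose m) = (-1) ^ t * ((- (real m + 1)) gchoose t)"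
proof -
  have "real ((m + t) choose m) = real ((m + t) choose t)"
    using binomial_symmetric[of m "m + t"] by simp
  also have "\<dots> = real (m + t) gchoose t"
    by (rule binomial_gbinomial)
  also have "\<dots> = (-1) ^ t * ((- (real m + 1)) gchoose t)"
    using gbinomial_minus[of "real m + 1" t] by (simp add: add_ac mult.assoc[symmetric])
  finally show ?thesis .
qed

lemma sum_alternating_choose_convolution:
  "(\<Sum>s=0..r. (-1) ^ s * real (N choose s) * real ((m + (r - s)) choose m))
     = (-1) ^ r * ((real N - real m - 1) gchoose r)"
proof -
  have "(-1) ^ s * real (N choose s) * real ((m + (r - s)) choose m)
      = (-1) ^ r * ((real N gchoose s) * ((- (real m + 1)) gchoose (r - s)))" if "s \<le> r" for s
  proof -
    have "(-1::real) ^ s * (-1) ^ (r - s) = (-1) ^ r"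
      using that by (simp flip: power_add)
    moreover have "(-1) ^ s * real (N choose s) * real ((m + (r - s)) choose m)
      = ((-1) ^ s * (-1) ^ (r - s)) * ((real N gchoose s) * ((- (real m + 1)) gchoose (r - s)))"
      unfolding choose_add_eq_gbinomial_neg[of m "r - s"] unfolding binomial_gbinomial by (simp only: mult_ac)
    ultimately show ?thesis by simp
  qed
  then have "(\<Sum>s=0..r. (-1) ^ s * real (N choose s) * real ((m + (r - s)) choose m))
      = (-1) ^ r * (\<Sum>s=0..r. (real N gchoose s) * ((- (real m + 1)) gchoose (r - s)))"
    by (simp add: sum_distrib_left)
  also have "\<dots> = (-1) ^ r * ((real N + - (real m + 1)) gchoose r)"
    by (simp only: gbinomial_Vandermonde)
  finally show ?thesis
    by (simp add: algebra_simps)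
qed

lemma sum_alternating_choose_central:
  assumes "b \<le> n"
  shows "(\<Sum>c=b..n. real (n choose (c - b)) * (-1) ^ (n + c) * real ((2*n - c) choose n))
    = (-1) ^ (n + b)"
proof -
  define f where "f c = real (n choose (c - b)) * (-1) ^ (n + c) * real ((2*n - c) choose n)" for c
  have "f (k + b) = (-1) ^ (n + b) * ((-1) ^ k * real (n choose k) * real ((n + ((n - b) - k)) choose n))"
    if "k \<le> n - b" for k
  proof -
    have "2*n - (k + b) = n + ((n - b) - k)"
      using that assms by simp
    then show ?thesis
      unfolding f_def by (simp add: power_add mult_ac)
  qed
  then have "sum f {b..n} = (-1) ^ (n + b) * (\<Sum>k=0..n-b. (-1) ^ k * real (n choose k) * real ((n + ((n - b) - k)) choose n))"
    using sum.shift_bounds_cl_nat_ivl[of f 0 b "n - b"] assms by (simp add: sum_distrib_left)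
  also have "\<dots> = (-1) ^ (n + b) * ((-1) ^ (n - b) * ((-1) gchoose (n - b)))"
    using sum_alternating_choose_convolution[where r = "n - b" and N = n and m = n] by simp
  also have "\<dots> = (-1) ^ (n + b)"
    using gbinomial_minus[of "1::real" "n - b"] by (simp add: binomial_gbinomial[symmetric])
  finally show ?thesis
    unfolding f_def .
qed

lemma choose_eq_alternating_convolution:
  "(\<Sum>t=0..r. (-1) ^ t * real ((n + t) choose n) * real ((2*n + 1) choose (r - t)))
     = real (n choose r)"
proof -
  have "(\<Sum>t=0..r. (-1) ^ t * real ((n + t) choose n) * real ((2*n + 1) choose (r - t)))
      = (\<Sum>s=0..r. (-1) ^ r * ((-1) ^ s * real ((2*n + 1) choose s) * real ((n + (r - s)) choose n)))"
    by (subst sum.atLeastAtMost_rev)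
      (intro sum.cong refl, auto simp: neg_one_power_add_eq_neg_one_power_diff[symmetric] power_add)
  also have "\<dots> = (-1) ^ r * ((-1) ^ r * (real n gchoose r))"
    using sum_alternating_choose_convolution[where N = "2*n + 1" and m = n and r = r]
    by (simp add: sum_distrib_left[symmetric])
  finally show ?thesis
    by (simp add: binomial_gbinomial mult.assoc[symmetric])
qed

lemma choose_mult_diff_eq_choose_Suc_mult:
  "j < n \<Longrightarrow> real (n choose j) * (real n - real j) = real (n choose Suc j) * (real j + 1)"
proof -
  assume "j < n"
  have "(n - j) * (n choose j) = Suc j * (n choose Suc j)"
    using binomial_absorb_comp[of n j] binomial_absorption[of j n] by simp
  then have "real (n - j) * real (n choose j) = (real j + 1) * real (n choose Suc j)"
    by (metis of_nat_Suc of_nat_mult add.commute)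
  with \<open>j < n\<close> show ?thesis
    by (simp add: of_nat_diff mult.commute)
qed

lemma choose_mult_choose:
  assumes "a \<le> i"
  shows "(m choose i) * (i choose a) = (m choose a) * ((m - a) choose (i - a))"
proof (cases "i \<le> m")
  case True
  then show ?thesis by (rule choose_mult[OF assms])
next
  case False
  then show ?thesis
    using assms by (cases "a \<le> m") (auto simp: binomial_eq_0)
qed

lemma sum_choose_mult_choose:
  assumes "a \<le> r"
  shows "(\<Sum>i\<le>r. (m choose i) * (N choose (r - i)) * (i choose a))
    = (m choose a) * ((m - a + N) choose (r - a))"
proof -
  have "(m choose i) * (N choose (r - i)) * (i choose a)
      = (m choose a) * (((m - a) choose (i - a)) * (N choose (r - i)))" if "a \<le> i" for i
  proof -
    have "(m choose i) * (N choose (r - i)) * (i choose a) = ((m choose i) * (i choose a)) * (N choose (r - i))"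
      by (simp only: mult_ac)
    then show ?thesis
      by (simp only: choose_mult_choose[OF that] mult.assoc)
  qed
  then have "(\<Sum>i\<le>r. (m choose i) * (N choose (r - i)) * (i choose a))
      = (\<Sum>i=a..r. (m choose a) * (((m - a) choose (i - a)) * (N choose (r - i))))"
    by (intro sum.mono_neutral_cong_right) auto
  also have "\<dots> = (m choose a) * (\<Sum>i=a..r. ((m - a) choose (i - a)) * (N choose (r - i)))"
    by (simp add: sum_distrib_left)
  also have "(\<Sum>i=a..r. ((m - a) choose (i - a)) * (N choose (r - i)))
      = (\<Sum>t\<le>r - a. ((m - a) choose t) * (N choose (r - a - t)))"
    using sum.shift_bounds_cl_nat_ivl[of "\<lambda>i. ((m - a) choose (i - a)) * (N choose (r - i))" 0 a "r - a"] assms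
    by (simp add: atLeast0AtMost add.commute)
  also have "(\<Sum>t\<le>r - a. ((m - a) choose t) * (N choose (r - a - t))) = (m - a + N) choose (r - a)"
    by (rule vandermonde)
  finally show ?thesis .
qed

lemma alternating_revision_summand:
  assumes "a \<le> i" "i \<le> n" "s \<le> i - a"
  shows "(-1) ^ (n + (s + (n - i + a))) * real ((2*n + 1) choose (s + (n - i + a) - a))
      * real ((s + (n - i + a) - a) choose (n - i)) * real ((2*n - (s + (n - i + a))) choose n)
    = real ((2*n + 1) choose (n - i)) * (-1) ^ (i - a)
      * ((-1) ^ s * real ((n + 1 + i) choose s) * real ((n + ((i - a) - s)) choose n))"
    (is "?lhs = _")
proof -
  have "n + (s + (n - i + a)) = (i - a) + s + 2 * (n - i + a)"
    using assms by simp
  then have sign: "(-1::real) ^ (n + (s + (n - i + a))) = (-1) ^ (i - a) * (-1) ^ s"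
    by (simp only: power_add power_mult) simp
  have shift: "s + (n - i + a) - a = s + (n - i)"
    and upper: "2*n - (s + (n - i + a)) = n + ((i - a) - s)"
    using assms by simp_all
  have "((2*n + 1) choose (s + (n - i))) * ((s + (n - i)) choose (n - i))
      = ((2*n + 1) choose (n - i)) * ((n + 1 + i) choose s)"
    using choose_mult[of "n - i" "s + (n - i)" "2*n + 1"] assms by simp
  then have revision: "real ((2*n + 1) choose (s + (n - i))) * real ((s + (n - i)) choose (n - i))
      = real ((2*n + 1) choose (n - i)) * real ((n + 1 + i) choose s)"
    by (simp flip: of_nat_mult)
  have "?lhs = (-1) ^ (i - a) * (-1) ^ s
      * (real ((2*n + 1) choose (s + (n - i))) * real ((s + (n - i)) choose (n - i)))
      * real ((n + ((i - a) - s)) choose n)"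
    unfolding sign shift upper by (simp only: mult_ac)
  then show ?thesis
    unfolding revision by (simp only: mult_ac)
qed

lemma sum_alternating_choose_revision:
  assumes "a \<le> n" "i \<le> n"
  shows "(\<Sum>c=a..n. (-1) ^ (n + c) * real ((2*n + 1) choose (c - a)) * real ((c - a) choose (n - i))
      * real ((2*n - c) choose n)) = real ((2*n + 1) choose (n - i)) * real (i choose a)"
proof (cases "a \<le> i")
  case False
  then have "i choose a = 0"
    by simp
  moreover have "(c - a) choose (n - i) = 0" if "c \<le> n" for c
    using False that assms by simp
  ultimately show ?thesis
    by (simp add: sum.neutral)
next
  case True
  define f where "f c = (-1) ^ (n + c) * real ((2*n + 1) choose (c - a)) * real ((c - a) choose (n - i))
      * real ((2*n - c) choose n)" for c
  have "f (s + (n - i + a)) = real ((2*n + 1) choose (n - i)) * (-1) ^ (i - a)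
      * ((-1) ^ s * real ((n + 1 + i) choose s) * real ((n + ((i - a) - s)) choose n))"
    if "s \<le> i - a" for s
    unfolding f_def using True assms(2) that by (rule alternating_revision_summand)
  then have "sum f {a..n} = real ((2*n + 1) choose (n - i)) * (-1) ^ (i - a)
      * (\<Sum>s=0..i - a. (-1) ^ s * real ((n + 1 + i) choose s) * real ((n + ((i - a) - s)) choose n))"
  proof -
    have "sum f {a..n} = sum f {n - i + a..n}"
      using True assms by (intro sum.mono_neutral_right) (auto simp: f_def)
    also have "\<dots> = (\<Sum>s=0..i - a. f (s + (n - i + a)))"
      using sum.shift_bounds_cl_nat_ivl[of f 0 "n - i + a" "i - a"] True assms by simp
    finally show ?thesis
      using \<open>\<And>s. s \<le> i - a \<Longrightarrow> _\<close> by (simp add: sum_distrib_left)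
  qed
  also have "\<dots> = real ((2*n + 1) choose (n - i)) * (-1) ^ (i - a) * ((-1) ^ (i - a) * (real i gchoose (i - a)))"
    using sum_alternating_choose_convolution[where N = "n + 1 + i" and m = n and r = "i - a"] by simp
  also have "\<dots> = real ((2*n + 1) choose (n - i)) * real (i choose a)"
    using binomial_symmetric[OF True] by (simp add: binomial_gbinomial[symmetric] mult.assoc[symmetric])
  finally show ?thesis
    unfolding f_def .
qed

definition weight :: "nat \<Rightarrow> nat \<Rightarrow> real" where
  "weight n c = real ((n + c) choose n) * real ((2*n - c) choose n)"

definition tail_sum :: "nat \<Rightarrow> nat \<Rightarrow> real" where
  "tail_sum n b = (\<Sum>a=b..n. (-1) ^ (a + b) * real ((3*n + 1) choose (n - a))
      * real ((n + a - b) choose n) * real ((n + a) choose n))"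

lemma sum_alternating_weight:
  assumes "a \<le> n"
  shows "(\<Sum>c=a..n. (-1) ^ (n + c) * real ((2*n + 1) choose (c - a)) * weight n c)
    = real ((n + a) choose n) * real ((3*n + 1) choose (n - a))"
proof -
  have "real ((n + c) choose n) = (\<Sum>i\<le>n. real ((n + a) choose i) * real ((c - a) choose (n - i)))"
    if "a \<le> c" for c
  proof -
    have "n + c = (n + a) + (c - a)"
      using that by simp
    then show ?thesis
      using vandermonde[of "n + a" "c - a" n] by (simp flip: of_nat_mult of_nat_sum)
  qed
  then have "(\<Sum>c=a..n. (-1) ^ (n + c) * real ((2*n + 1) choose (c - a)) * weight n c)
      = (\<Sum>c=a..n. \<Sum>i\<le>n. real ((n + a) choose i) * ((-1) ^ (n + c) * real ((2*n + 1) choose (c - a))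
          * real ((c - a) choose (n - i)) * real ((2*n - c) choose n)))"
    unfolding weight_def by (intro sum.cong) (auto simp: sum_distrib_left sum_distrib_right mult_ac)
  also have "\<dots> = (\<Sum>i\<le>n. real ((n + a) choose i) * (\<Sum>c=a..n. (-1) ^ (n + c) * real ((2*n + 1) choose (c - a))
          * real ((c - a) choose (n - i)) * real ((2*n - c) choose n)))"
    by (subst sum.swap) (simp add: sum_distrib_left)
  also have "\<dots> = (\<Sum>i\<le>n. real ((n + a) choose i) * (real ((2*n + 1) choose (n - i)) * real (i choose a)))"
    using assms by (intro sum.cong refl, subst sum_alternating_choose_revision) auto
  also have "\<dots> = real (\<Sum>i\<le>n. ((n + a) choose i) * ((2*n + 1) choose (n - i)) * (i choose a))"
    by (simp add: mult.assoc)
  also have "\<dots> = real ((n + a) choose n) * real ((3*n + 1) choose (n - a))"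
    using sum_choose_mult_choose[OF assms, of "n + a" "2*n + 1"] binomial_symmetric[of a "n + a"]
    by (simp add: add.commute)
  finally show ?thesis .
qed

lemma sum_triangle_swap:
  fixes g :: "nat \<Rightarrow> nat \<Rightarrow> 'a::comm_monoid_add"
  shows "(\<Sum>c=b..n. \<Sum>a=b..c. g a c) = (\<Sum>a=b..n. \<Sum>c=a..n. g a c)"
proof -
  have "(\<Sum>c=b..n. \<Sum>a=b..c. g a c) = (\<Sum>c\<in>{b..n}. \<Sum>a\<in>{a. a \<in> {b..n} \<and> a \<le> c}. g a c)"
    by (intro sum.cong) auto
  also have "\<dots> = (\<Sum>a\<in>{b..n}. \<Sum>c\<in>{c. c \<in> {b..n} \<and> a \<le> c}. g a c)"
    by (rule sum.swap_restrict[symmetric]) auto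
  also have "\<dots> = (\<Sum>a=b..n. \<Sum>c=a..n. g a c)"
    by (intro sum.cong) auto
  finally show ?thesis .
qed

lemma sum_choose_weight_alternating:
  assumes "b \<le> n"
  shows "(\<Sum>c=b..n. real (n choose (c - b)) * weight n c * (-1) ^ (n + c)) = tail_sum n b"
proof -
  have "real (n choose (c - b))
      = (\<Sum>a=b..c. (-1) ^ (a - b) * real ((n + (a - b)) choose n) * real ((2*n + 1) choose (c - a)))"
    if "b \<le> c" for c
    using choose_eq_alternating_convolution[of n "c - b"]
      sum.shift_bounds_cl_nat_ivl[of "\<lambda>a. (-1) ^ (a - b) * real ((n + (a - b)) choose n)
        * real ((2*n + 1) choose (c - a))" 0 b "c - b"] that
    by (simp add: add.commute)
  then have "(\<Sum>c=b..n. real (n choose (c - b)) * weight n c * (-1) ^ (n + c))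
      = (\<Sum>c=b..n. \<Sum>a=b..c. (-1) ^ (a - b) * real ((n + (a - b)) choose n)
          * ((-1) ^ (n + c) * real ((2*n + 1) choose (c - a)) * weight n c))"
    by (intro sum.cong) (auto simp: sum_distrib_left sum_distrib_right mult_ac)
  also have "\<dots> = (\<Sum>a=b..n. (-1) ^ (a - b) * real ((n + (a - b)) choose n)
      * (\<Sum>c=a..n. (-1) ^ (n + c) * real ((2*n + 1) choose (c - a)) * weight n c))"
    by (simp add: sum_triangle_swap sum_distrib_left)
  also have "\<dots> = (\<Sum>a=b..n. (-1) ^ (a - b) * real ((n + (a - b)) choose n)
      * (real ((n + a) choose n) * real ((3*n + 1) choose (n - a))))"
    by (intro sum.cong refl, subst sum_alternating_weight) auto
  also have "\<dots> = tail_sum n b"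
    unfolding tail_sum_def
  proof (intro sum.cong refl)
    fix a assume "a \<in> {b..n}"
    then have "(-1::real) ^ (a + b) = (-1) ^ (a - b)" and "n + (a - b) = n + a - b"
      by (simp_all add: neg_one_power_add_eq_neg_one_power_diff)
    then show "(-1) ^ (a - b) * real ((n + (a - b)) choose n) * (real ((n + a) choose n) * real ((3*n + 1) choose (n - a)))
      = (-1) ^ (a + b) * real ((3*n + 1) choose (n - a)) * real ((n + a - b) choose n) * real ((n + a) choose n)"
      by (simp only: mult_ac)
  qed
  finally show ?thesis .
qed

section \<open>The residue functional\<close>

text \<open>residue_sum n N is the sum of the residues at t = 0, ..., n of
  (-1)^n n! pi N(t) / (sin(pi t) t (t - 1) ... (t - n)).\<close>

definition residue_sum :: "nat \<Rightarrow> real poly \<Rightarrow> real" where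
  "residue_sum n p = (\<Sum>j\<le>n. real (n choose j)
      * (poly (pderiv p) (real j) + (harm (n - j) - harm j) * poly p (real j)))"

lemma residue_sum_0 [simp]: "residue_sum n 0 = 0"
  by (simp add: residue_sum_def)

lemma residue_sum_add: "residue_sum n (p + q) = residue_sum n p + residue_sum n q"
  unfolding residue_sum_def sum.distrib[symmetric] by (rule sum.cong) (simp_all add: pderiv_add algebra_simps)

lemma residue_sum_diff: "residue_sum n (p - q) = residue_sum n p - residue_sum n q"
  unfolding residue_sum_def sum_subtractf[symmetric] by (rule sum.cong) (simp_all add: pderiv_diff algebra_simps)

lemma residue_sum_smult: "residue_sum n (smult c p) = c * residue_sum n p"
  by (simp add: residue_sum_def pderiv_smult algebra_simps sum_distrib_left)

lemma residue_sum_sum: "residue_sum n (\<Sum>k\<in>A. f k) = (\<Sum>k\<in>A. residue_sum n (f k))"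
  by (induction A rule: infinite_finite_induct) (simp_all add: residue_sum_add)

lemma poly_pderiv_eq_0_if_square_dvd:
  fixes p :: "'a::idom poly"
  assumes "[:- a, 1:] ^ 2 dvd p"
  shows "poly p a = 0" and "poly (pderiv p) a = 0"
proof -
  obtain q where q: "p = [:- a, 1:] ^ 2 * q"
    using assms by (auto elim: dvdE)
  show "poly p a = 0"
    by (simp add: q)
  show "poly (pderiv p) a = 0"
    by (simp add: q pderiv_mult pderiv_power pderiv_pCons)
qed

lemma residue_sum_eq_0:
  assumes "\<And>j. j \<le> n \<Longrightarrow> [:- real j, 1:] ^ 2 dvd p"
  shows "residue_sum n p = 0"
  unfolding residue_sum_def
proof (intro sum.neutral ballI)
  fix j assume "j \<in> {..n}"
  then have "[:- real j, 1:] ^ 2 dvd p"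
    using assms by simp
  from poly_pderiv_eq_0_if_square_dvd[OF this] show
    "real (n choose j) * (poly (pderiv p) (real j) + (harm (n - j) - harm j) * poly p (real j)) = 0"
    by simp
qed

lemma residue_sum_summand_shift:
  assumes "j < n"
  shows "real (n choose j) * (- y + (real n - real j) * d + (harm (n - j) - harm j) * ((real n - real j) * y))
    = real (n choose Suc j) * (y + (real j + 1) * d + (harm (n - Suc j) - harm (Suc j)) * ((real j + 1) * y))"
proof -
  define D where "D = real n - real j"
  define E where "E = real j + 1"
  define H :: real where "H = harm (n - Suc j) - harm j"
  have "D \<noteq> 0" "E \<noteq> 0"
    using assms by (simp_all add: D_def E_def)
  have "harm (n - j) = harm (n - Suc j) + 1 / D"
    using assms by (simp add: D_def Suc_diff_Suc[symmetric] harm_Suc of_nat_diff divide_inverse)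
  then have lower: "harm (n - j) - harm j = H + 1 / D"
    by (simp add: H_def)
  have upper: "harm (n - Suc j) - harm (Suc j) = H - 1 / E"
    by (simp add: H_def E_def harm_Suc divide_inverse add.commute)
  have lhs: "real (n choose j) * (- y + D * d + (harm (n - j) - harm j) * (D * y))
      = real (n choose j) * D * (d + H * y)"
    and rhs: "real (n choose Suc j) * (y + E * d + (harm (n - Suc j) - harm (Suc j)) * (E * y))
      = real (n choose Suc j) * E * (d + H * y)"
    unfolding lower upper using \<open>D \<noteq> 0\<close> \<open>E \<noteq> 0\<close> by (simp_all add: field_simps)
  have "real (n choose j) * D = real (n choose Suc j) * E"
    unfolding D_def E_def using assms by (rule choose_mult_diff_eq_choose_Suc_mult)
  then have "real (n choose j) * (- y + D * d + (harm (n - j) - harm j) * (D * y))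
      = real (n choose Suc j) * (y + E * d + (harm (n - Suc j) - harm (Suc j)) * (E * y))"
    by (simp only: lhs rhs)
  then show ?thesis
    by (simp only: D_def E_def)
qed

lemma residue_sum_shift:
  "residue_sum n ([:0, 1:] * p) - residue_sum n ([:real n, -1:] * pcompose p [:1, 1:])
    = poly p 0 + poly p (real n + 1)"
proof -
  define A where "A j = real (n choose j) * (poly p (real j) + real j * poly (pderiv p) (real j)
      + (harm (n - j) - harm j) * (real j * poly p (real j)))" for j
  define B where "B j = real (n choose j) * (- poly p (real j + 1) + (real n - real j) * poly (pderiv p) (real j + 1)
      + (harm (n - j) - harm j) * ((real n - real j) * poly p (real j + 1)))" for j
  have "residue_sum n ([:0, 1:] * p) = (\<Sum>j\<le>n. A j)"
    unfolding residue_sum_def A_def by (simp add: pderiv_mult pderiv_pCons algebra_simps)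
  also have "\<dots> = poly p 0 + (\<Sum>j<n. A (Suc j))"
    by (simp add: sum.atMost_shift A_def)
  finally have left: "residue_sum n ([:0, 1:] * p) = poly p 0 + (\<Sum>j<n. A (Suc j))" .
  have pderiv_shifted: "pderiv ([:real n, -1:] * pcompose p [:1, 1:])
      = [:real n, -1:] * pcompose (pderiv p) [:1, 1:] - pcompose p [:1, 1:]"
    unfolding pderiv_mult pderiv_pcompose by (simp add: pderiv_pCons)
  have "residue_sum n ([:real n, -1:] * pcompose p [:1, 1:]) = (\<Sum>j\<le>n. B j)"
    unfolding residue_sum_def B_def pderiv_shifted by (simp add: poly_pcompose algebra_simps del: pderiv_mult)
  also have "\<dots> = (\<Sum>j<n. B j) - poly p (real n + 1)"
    by (simp add: lessThan_Suc_atMost[symmetric] B_def)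
  also have "(\<Sum>j<n. B j) = (\<Sum>j<n. A (Suc j))"
  proof (intro sum.cong refl)
    fix j assume "j \<in> {..<n}"
    then show "B j = A (Suc j)"
      unfolding A_def B_def
      using residue_sum_summand_shift[of j n "poly p (real j + 1)" "poly (pderiv p) (real j + 1)"]
      by (simp add: add_ac)
  qed
  finally show ?thesis
    using left by simp
qed

definition sym_fall :: "nat \<Rightarrow> nat \<Rightarrow> real poly" where
  "sym_fall n b = (\<Prod>i<b. [:- real i, 1:]) * (\<Prod>i<b. [:real i - real n, 1:])"

lemma poly_sym_fall:
  "poly (sym_fall n b) x = (\<Prod>i<b. x - real i) * (\<Prod>i<b. x - real n + real i)"
  by (simp add: sym_fall_def poly_prod algebra_simps)

lemma sym_fall_Suc:
  "sym_fall n (Suc b) = sym_fall n b * ([:- real b, 1:] * [:real b - real n, 1:])"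
  unfolding sym_fall_def prod.lessThan_Suc by (simp only: mult_ac)

lemma residue_sum_mult_sym_fall:
  assumes "n < c"
  shows "residue_sum n (q * sym_fall n c) = 0"
proof (rule residue_sum_eq_0)
  fix j assume "j \<le> n"
  have "[:- real j, 1:] dvd (\<Prod>i<c. [:- real i, 1:])"
    using \<open>j \<le> n\<close> assms by (intro dvd_prodI) auto
  moreover have "[:real (n - j) - real n, 1:] dvd (\<Prod>i<c. [:real i - real n, 1:])"
    using assms by (intro dvd_prodI[where f = "\<lambda>i. [:real i - real n, 1:]"]) auto
  then have "[:- real j, 1:] dvd (\<Prod>i<c. [:real i - real n, 1:])"
    using \<open>j \<le> n\<close> by (simp add: of_nat_diff)
  ultimately have "[:- real j, 1:] ^ 2 dvd sym_fall n c"
    unfolding sym_fall_def power2_eq_square by (rule mult_dvd_mono)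
  then show "[:- real j, 1:] ^ 2 dvd q * sym_fall n c"
    by (rule dvd_mult)
qed

lemma linear_mult_sym_fall_eq_shift_diff:
  fixes n b :: nat and N :: "real poly"
  defines "N \<equiv> (\<Prod>i<b. [:- (real i + 1), 1:]) * (\<Prod>i<b. [:real i - real n, 1:])"
  shows "[:- real n, 2:] * sym_fall n b = [:0, 1:] * N - [:real n, -1:] * pcompose N [:1, 1:]"
proof -
  have poly_N: "poly N x = (\<Prod>i<b. x - (real i + 1)) * (\<Prod>i<b. x - real n + real i)" for x
    by (simp add: N_def poly_prod algebra_simps)
  have "poly ([:- real n, 2:] * sym_fall n b) x
      = poly ([:0, 1:] * N - [:real n, -1:] * pcompose N [:1, 1:]) x" for x
  proof -
    define A where "A = (\<Prod>i<b. x - real i)"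
    define R where "R = (\<Prod>i<b. x - real n + real i)"
    have "x * (\<Prod>i<b. x - (real i + 1)) = A * (x - real b)"
      using prod.lessThan_Suc_shift[of "\<lambda>i. x - real i" b] by (simp add: A_def add.commute)
    then have left: "poly ([:0, 1:] * N) x = A * (x - real b) * R"
      by (simp add: poly_N R_def)
    have "(\<Prod>i<Suc b. x - real n + real i) = (x - real n) * (\<Prod>i<b. 1 + x - real n + real i)"
      by (subst prod.lessThan_Suc_shift) (simp add: algebra_simps)
    then have shift_R: "(real n - x) * (\<Prod>i<b. 1 + x - real n + real i) = - (R * (x - real n + real b))"
      by (simp add: R_def algebra_simps)
    have shift_A: "(\<Prod>i<b. 1 + x - (real i + 1)) = A"
      by (simp add: A_def)
    have "poly ([:real n, -1:] * pcompose N [:1, 1:]) x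
        = (real n - x) * ((\<Prod>i<b. 1 + x - (real i + 1)) * (\<Prod>i<b. 1 + x - real n + real i))"
      by (simp add: poly_N poly_pcompose left_diff_distrib)
    also have "\<dots> = A * ((real n - x) * (\<Prod>i<b. 1 + x - real n + real i))"
      unfolding shift_A by (simp only: mult_ac)
    finally have right: "poly ([:real n, -1:] * pcompose N [:1, 1:]) x = - (A * (R * (x - real n + real b)))"
      unfolding shift_R by simp
    show ?thesis
      unfolding poly_diff left right by (simp add: poly_sym_fall A_def R_def algebra_simps)
  qed
  then show ?thesis
    by (rule poly_eq_poly_eq_iff[THEN iffD1, OF ext])
qed

lemma residue_sum_linear_sym_fall:
  "residue_sum n ([:- real n, 2:] * sym_fall n b) = 2 * fact b ^ 2 * real (n choose b)"
proof -
  define N where "N = (\<Prod>i<b. [:- (real i + 1), 1:]) * (\<Prod>i<b. [:real i - real n, 1:])"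
  have poly_N: "poly N x = (\<Prod>i<b. x - (real i + 1)) * (\<Prod>i<b. x - real n + real i)" for x
    by (simp add: N_def poly_prod algebra_simps)
  have "residue_sum n ([:- real n, 2:] * sym_fall n b) = poly N 0 + poly N (real n + 1)"
    unfolding linear_mult_sym_fall_eq_shift_diff N_def[symmetric] residue_sum_diff by (rule residue_sum_shift)
  also have "poly N 0 = (\<Prod>i<b. real i + 1) * (\<Prod>i<b. real n - real i)"
    unfolding poly_N prod.distrib[symmetric] by (intro prod.cong) (simp_all add: algebra_simps)
  also have "poly N (real n + 1) = (\<Prod>i<b. real i + 1) * (\<Prod>i<b. real n - real i)"
    unfolding poly_N prod.distrib[symmetric] by (intro prod.cong) (simp_all add: algebra_simps)
  also have "(\<Prod>i<b. real i + 1) = fact b"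
    by (simp add: fact_prod_Suc atLeast0LessThan add.commute)
  also have "(\<Prod>i<b. real n - real i) = fact b * real (n choose b)"
    by (simp add: binomial_gbinomial gbinomial_mult_fact atLeast0LessThan)
  finally show ?thesis
    by (simp add: power2_eq_square)
qed

section \<open>Newton expansion of the weight polynomial\<close>

definition poch_pair :: "nat \<Rightarrow> nat \<Rightarrow> real poly" where
  "poch_pair n m = (\<Prod>i=1..m. [:real i, 1:] * [:real n + real i, -1:])"

definition newton_coeff :: "nat \<Rightarrow> nat \<Rightarrow> nat \<Rightarrow> nat \<Rightarrow> real" where
  "newton_coeff n m b k = (-1) ^ k * real (m choose k)
      * pochhammer (real b + real k + 1) (m - k) * pochhammer (real n - real b + 1) (m - k)"

text \<open>In the variable u = t (n - t) the factor (t + i) (n + i - t) of poch_pair is i (n + i) + u,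
  while sym_fall grows by the factor c (n - c) - u.\<close>

lemma poch_pair_factor_mult_sym_fall:
  "[:real i, 1:] * [:real n + real i, -1:] * sym_fall n c
    = smult (real i * (real n + real i) + real c * (real n - real c)) (sym_fall n c) - sym_fall n (Suc c)"
proof -
  have "poly ([:real i, 1:] * [:real n + real i, -1:] * sym_fall n c) x
      = poly (smult (real i * (real n + real i) + real c * (real n - real c)) (sym_fall n c) - sym_fall n (Suc c)) x"
    for x
    by (simp add: sym_fall_Suc algebra_simps)
  then show ?thesis
    by (rule poly_eq_poly_eq_iff[THEN iffD1, OF ext])
qed

lemma newton_coeff_Suc_0:
  "newton_coeff n (Suc m) b 0
    = newton_coeff n m b 0 * ((real m + 1) * (real n + real m + 1) + real b * (real n - real b))"
  unfolding newton_coeff_def by (simp add: pochhammer_Suc algebra_simps)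

lemma newton_coeff_above: "newton_coeff n m b (Suc m) = 0"
  unfolding newton_coeff_def by simp

lemma newton_coeff_Suc_Suc:
  assumes "k \<le> m"
  shows "newton_coeff n (Suc m) b (Suc k)
    = newton_coeff n m b (Suc k) * ((real m + 1) * (real n + real m + 1)
        + real (b + Suc k) * (real n - real (b + Suc k))) - newton_coeff n m b k"
proof (cases "k = m")
  case True
  then show ?thesis
    unfolding newton_coeff_def by simp
next
  case False
  define d where "d = m - Suc k"
  have md: "m - k = Suc d" "Suc m - Suc k = Suc d" "m - Suc k = d"
    using assms False by (auto simp: d_def)
  define s where "s = real n - real b"
  define P where "P = pochhammer (real b + real (Suc k) + 1) d"
  define P' where "P' = pochhammer (s + 1) d"
  define c0 where "c0 = real (m choose k)"
  define c1 where "c1 = real (m choose Suc k)"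
  have "c1 * (real k + 1) = c0 * (real m - real k)"
    unfolding c0_def c1_def using choose_mult_diff_eq_choose_Suc_mult[of k m] assms False by simp
  have P_Suc: "pochhammer (real b + real (Suc k) + 1) (Suc d) = P * (real b + real m + 1)"
    and P'_Suc: "pochhammer (s + 1) (Suc d) = P' * (s + real m - real k)"
    unfolding P_def P'_def pochhammer_Suc d_def using assms False by (simp_all add: of_nat_diff algebra_simps)
  have P_rec: "pochhammer (real b + real k + 1) (Suc d) = (real b + real k + 1) * P"
    unfolding P_def pochhammer_rec by (simp add: algebra_simps)
  have left: "newton_coeff n (Suc m) b (Suc k)
      = - ((-1) ^ k * (c0 + c1) * (P * (real b + real m + 1)) * (P' * (s + real m - real k)))"
    unfolding newton_coeff_def md s_def[symmetric] P_Suc[symmetric] P'_Suc[symmetric] c0_def c1_def by simp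
  have right1: "newton_coeff n m b (Suc k) = - ((-1) ^ k * c1 * P * P')"
    unfolding newton_coeff_def md s_def[symmetric] c1_def P_def P'_def by simp
  have right2: "newton_coeff n m b k = (-1) ^ k * c0 * ((real b + real k + 1) * P) * (P' * (s + real m - real k))"
    unfolding newton_coeff_def md s_def[symmetric] c0_def P_rec[symmetric] P'_Suc[symmetric] by simp
  have "real n = s + real b"
    unfolding s_def by simp
  then have "newton_coeff n (Suc m) b (Suc k) - (newton_coeff n m b (Suc k) * ((real m + 1) * (real n + real m + 1)
        + real (b + Suc k) * (real n - real (b + Suc k))) - newton_coeff n m b k)
      = (-1) ^ k * P * P' * (s + real m - real k) * (c1 * (real k + 1) - c0 * (real m - real k))"
    unfolding left right1 right2 by (simp add: algebra_simps)
  also have "\<dots> = 0"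
    using \<open>c1 * (real k + 1) = c0 * (real m - real k)\<close> by simp
  finally show ?thesis
    by simp
qed

lemma poch_pair_mult_sym_fall:
  "poch_pair n m * sym_fall n b = (\<Sum>k\<le>m. smult (newton_coeff n m b k) (sym_fall n (b + k)))"
proof (induction m)
  case 0
  then show ?case
    by (simp add: poch_pair_def newton_coeff_def)
next
  case (Suc m)
  define p where "p k = sym_fall n (b + k)" for k
  define \<beta> where "\<beta> k = newton_coeff n m b k" for k
  define \<gamma> where "\<gamma> k = (real m + 1) * (real n + real m + 1) + real (b + k) * (real n - real (b + k))" for k
  define F where "F = [:real (Suc m), 1:] * [:real n + real (Suc m), -1:]"
  have F_mult: "F * p k = smult (\<gamma> k) (p k) - p (Suc k)" for k
    using poch_pair_factor_mult_sym_fall[of "Suc m" n "b + k"]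
    by (simp add: F_def p_def \<gamma>_def algebra_simps)
  have "poch_pair n (Suc m) * sym_fall n b = F * (\<Sum>k\<le>m. smult (\<beta> k) (p k))"
    by (simp add: poch_pair_def F_def Suc.IH[symmetric] \<beta>_def p_def mult_ac)
  also have "\<dots> = (\<Sum>k\<le>m. smult (\<beta> k * \<gamma> k) (p k)) - (\<Sum>k\<le>m. smult (\<beta> k) (p (Suc k)))"
    by (simp add: sum_distrib_left mult_smult_right F_mult smult_diff_right sum_subtractf)
  also have "(\<Sum>k\<le>m. smult (\<beta> k * \<gamma> k) (p k)) = (\<Sum>k\<le>Suc m. smult (\<beta> k * \<gamma> k) (p k))"
    by (simp add: \<beta>_def newton_coeff_above)
  also have "\<dots> = smult (\<beta> 0 * \<gamma> 0) (p 0) + (\<Sum>k\<le>m. smult (\<beta> (Suc k) * \<gamma> (Suc k)) (p (Suc k)))"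
    by (rule sum.atMost_Suc_shift)
  also have "\<dots> - (\<Sum>k\<le>m. smult (\<beta> k) (p (Suc k)))
      = smult (newton_coeff n (Suc m) b 0) (p 0)
        + (\<Sum>k\<le>m. smult (newton_coeff n (Suc m) b (Suc k)) (p (Suc k)))"
    by (simp add: newton_coeff_Suc_0 newton_coeff_Suc_Suc \<beta>_def \<gamma>_def smult_diff_left sum_subtractf)
  also have "\<dots> = (\<Sum>k\<le>Suc m. smult (newton_coeff n (Suc m) b k) (sym_fall n (b + k)))"
    by (simp only: sum.atMost_Suc_shift p_def add_0_right)
  finally show ?case .
qed

definition weight_poly :: "nat \<Rightarrow> real poly" where
  "weight_poly n = smult (1 / fact n ^ 2) (poch_pair n n)"

lemma pochhammer_of_nat_plus_1: "pochhammer (real a + 1) k = fact (a + k) / fact a"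
proof -
  have "fact (a + k) = fact a * pochhammer (real a + 1) k"
    using pochhammer_product'[of "1::real" a k] by (simp add: pochhammer_fact add.commute)
  then show ?thesis
    by simp
qed

lemma weight_eq_fact:
  assumes "c \<le> n"
  shows "weight n c = fact (n + c) * fact (2*n - c) / (fact n ^ 2 * fact c * fact (n - c))"
proof -
  have "real ((2*n - c) choose n) = fact (2*n - c) / (fact n * fact (n - c))"
    using binomial_fact[of n "2*n - c", where 'a = real] assms by simp
  then show ?thesis
    using binomial_fact[of n "n + c", where 'a = real] by (simp add: weight_def power2_eq_square)
qed

lemma poly_poch_pair:
  "poly (poch_pair n m) x = pochhammer (x + 1) m * pochhammer (real n - x + 1) m"
  by (induction m) (simp_all add: poch_pair_def pochhammer_Suc algebra_simps)

lemma poly_weight_poly: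
  assumes "j \<le> n"
  shows "poly (weight_poly n) (real j) = weight n j"
proof -
  have "real n - real j = real (n - j)"
    using assms by (simp add: of_nat_diff)
  then have "pochhammer (real n - real j + 1) n = fact (n - j + n) / fact (n - j)"
    by (simp only: pochhammer_of_nat_plus_1)
  also have "n - j + n = 2*n - j"
    using assms by simp
  finally have "pochhammer (real n - real j + 1) n = fact (2*n - j) / fact (n - j)" .
  moreover have "pochhammer (real j + 1) n = fact (n + j) / fact j"
    using pochhammer_of_nat_plus_1[of j n] by (simp add: add.commute)
  ultimately show ?thesis
    using assms by (simp add: weight_poly_def poly_poch_pair weight_eq_fact)
qed

lemma poly_pderiv_poch_pair:
  assumes "0 \<le> x" "x \<le> real n"
  shows "poly (pderiv (poch_pair n m)) x
    = poly (poch_pair n m) x * (\<Sum>i=1..m. 1 / (x + real i) - 1 / (real n + real i - x))"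
proof (induction m)
  case 0
  then show ?case
    by (simp add: poch_pair_def)
next
  case (Suc m)
  define F where "F = [:real (Suc m), 1:] * [:real n + real (Suc m), -1:]"
  have Suc_eq: "poch_pair n (Suc m) = poch_pair n m * F"
    by (simp add: poch_pair_def F_def)
  have F_deriv: "poly (pderiv F) x = poly F x * (1 / (x + real (Suc m)) - 1 / (real n + real (Suc m) - x))"
  proof -
    have partial_fractions: "c - a = (a * c) * (1 / a - 1 / c)" if "a \<noteq> 0" "c \<noteq> 0" for a c :: real
      using that by (simp add: field_simps)
    have "poly F x = (x + real (Suc m)) * (real n + real (Suc m) - x)"
      and "poly (pderiv F) x = (real n + real (Suc m) - x) - (x + real (Suc m))"
      by (simp_all add: F_def pderiv_mult pderiv_pCons algebra_simps)
    then show ?thesis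
      using assms by (simp only:) (rule partial_fractions; simp)
  qed
  have "poly (pderiv (poch_pair n (Suc m))) x
      = poly (poch_pair n m) x * poly (pderiv F) x + poly F x * poly (pderiv (poch_pair n m)) x"
    unfolding Suc_eq pderiv_mult by simp
  also have "\<dots> = poly (poch_pair n (Suc m)) x * ((\<Sum>i=1..m. 1 / (x + real i) - 1 / (real n + real i - x))
      + (1 / (x + real (Suc m)) - 1 / (real n + real (Suc m) - x)))"
    unfolding F_deriv Suc.IH Suc_eq by (simp add: algebra_simps)
  finally show ?case
    by simp
qed

lemma sum_inverse_eq_harm_diff: "(\<Sum>i=1..m. 1 / (real a + real i)) = harm (a + m) - harm a"
  by (induction m) (simp_all add: harm_Suc divide_inverse add_ac)

lemma poly_pderiv_weight_poly:
  assumes "j \<le> n"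
  shows "poly (pderiv (weight_poly n)) (real j)
    = weight n j * ((harm (n + j) - harm j) + (harm (n - j) - harm (2*n - j)))"
proof -
  have "(\<Sum>i=1..n. 1 / (real n + real i - real j)) = (\<Sum>i=1..n. 1 / (real (n - j) + real i))"
    using assms by (intro sum.cong) (auto simp: of_nat_diff)
  also have "\<dots> = harm (2*n - j) - harm (n - j)"
    using sum_inverse_eq_harm_diff[of "n - j" n] assms by (simp add: numeral_2_eq_2)
  finally have "(\<Sum>i=1..n. 1 / (real j + real i) - 1 / (real n + real i - real j))
      = (harm (n + j) - harm j) + (harm (n - j) - harm (2*n - j))"
    using sum_inverse_eq_harm_diff[of j n] by (simp add: sum_subtractf add.commute)
  moreover have "poly (pderiv (weight_poly n)) (real j)
      = poly (weight_poly n) (real j) * (\<Sum>i=1..n. 1 / (real j + real i) - 1 / (real n + real i - real j))"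
    using poly_pderiv_poch_pair[of "real j" n n] assms by (simp add: weight_poly_def pderiv_smult)
  ultimately show ?thesis
    using poly_weight_poly[OF assms] by simp
qed

section \<open>The recursion\<close>

text \<open>The normalisation turns the Newton coefficients into binom(n, c - b) weight n c,
  see znorm_mult_newton_coeff.\<close>

definition znorm :: "nat \<Rightarrow> nat \<Rightarrow> real" where
  "znorm n b = (-1) ^ (n + b) * fact (n - b) / (2 * fact (n + b))"

definition zsum :: "nat \<Rightarrow> nat \<Rightarrow> nat \<Rightarrow> real" where
  "zsum n M b = znorm n b * residue_sum n ([:- real n, 2:] * sym_fall n b * weight_poly n ^ M)"

lemma znorm_mult_newton_coeff:
  assumes "b \<le> c" "c \<le> n"
  shows "znorm n b / fact n ^ 2 * newton_coeff n n b (c - b) = real (n choose (c - b)) * weight n c * znorm n c"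
proof -
  have "real b + real (c - b) = real c" and "c + (n - (c - b)) = n + b"
    using assms by (simp_all add: of_nat_diff)
  then have rise_c: "pochhammer (real b + real (c - b) + 1) (n - (c - b)) = fact (n + b) / fact c"
    by (simp only: pochhammer_of_nat_plus_1)
  have "real n - real b = real (n - b)" and "n - b + (n - (c - b)) = 2*n - c"
    using assms by (simp_all add: of_nat_diff)
  then have rise_nb: "pochhammer (real n - real b + 1) (n - (c - b)) = fact (2*n - c) / fact (n - b)"
    by (simp only: pochhammer_of_nat_plus_1)
  have "znorm n b / fact n ^ 2 * newton_coeff n n b (c - b)
      = ((-1) ^ (n + b) * (-1) ^ (c - b)) * (real (n choose (c - b)) * fact (2*n - c) / (2 * fact n ^ 2 * fact c))"
    unfolding znorm_def newton_coeff_def rise_c rise_nb by (simp add: field_simps)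
  moreover have "real (n choose (c - b)) * weight n c * znorm n c
      = (-1) ^ (n + c) * (real (n choose (c - b)) * fact (2*n - c) / (2 * fact n ^ 2 * fact c))"
    unfolding znorm_def weight_eq_fact[OF assms(2)] by (simp add: field_simps)
  moreover have "(-1::real) ^ (n + b) * (-1) ^ (c - b) = (-1) ^ (n + c)"
    using assms by (simp flip: power_add)
  ultimately show ?thesis
    by simp
qed

lemma zsum_Suc:
  assumes "b \<le> n"
  shows "zsum n (Suc M) b = (\<Sum>c=b..n. real (n choose (c - b)) * weight n c * zsum n M c)"
proof -
  define G where "G = [:- real n, 2:] * weight_poly n ^ M"
  define r where "r c = residue_sum n (G * sym_fall n c)" for c
  have zsum_eq: "zsum n M c = znorm n c * r c" for c
    unfolding zsum_def r_def G_def by (simp only: mult_ac)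
  have "[:- real n, 2:] * sym_fall n b * weight_poly n ^ Suc M = G * (weight_poly n * sym_fall n b)"
    by (simp only: G_def power_Suc mult_ac)
  also have "\<dots> = smult (1 / fact n ^ 2) (\<Sum>k\<le>n. smult (newton_coeff n n b k) (G * sym_fall n (b + k)))"
    by (simp add: weight_poly_def poch_pair_mult_sym_fall mult_smult_right sum_distrib_left)
  finally have "residue_sum n ([:- real n, 2:] * sym_fall n b * weight_poly n ^ Suc M)
      = 1 / fact n ^ 2 * (\<Sum>k\<le>n. newton_coeff n n b k * r (b + k))"
    by (simp add: residue_sum_smult residue_sum_sum r_def)
  also have "(\<Sum>k\<le>n. newton_coeff n n b k * r (b + k)) = (\<Sum>k=0..n - b. newton_coeff n n b k * r (b + k))"
    by (rule sum.mono_neutral_right) (auto simp: r_def residue_sum_mult_sym_fall)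
  also have "\<dots> = (\<Sum>c=b..n. newton_coeff n n b (c - b) * r c)"
    using sum.shift_bounds_cl_nat_ivl[of "\<lambda>c. newton_coeff n n b (c - b) * r c" 0 b "n - b"] assms
    by (simp add: add.commute)
  finally have "zsum n (Suc M) b = (\<Sum>c=b..n. znorm n b / fact n ^ 2 * newton_coeff n n b (c - b) * r c)"
    by (simp add: zsum_def sum_distrib_left mult_ac)
  also have "\<dots> = (\<Sum>c=b..n. real (n choose (c - b)) * weight n c * zsum n M c)"
    by (intro sum.cong refl, subst znorm_mult_newton_coeff) (auto simp: zsum_eq mult.assoc)
  finally show ?thesis .
qed

lemma zsum_0:
  assumes "b \<le> n"
  shows "zsum n 0 b = (-1) ^ (n + b) / real ((n + b) choose n)"
proof -
  have zsum_0_eq: "zsum n 0 b = znorm n b * (2 * fact b ^ 2 * real (n choose b))"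
    unfolding zsum_def power_0 mult_1_right residue_sum_linear_sym_fall ..
  have choose_fact: "real (n choose b) = fact n / (fact b * fact (n - b))"
    "real ((n + b) choose n) = fact (n + b) / (fact n * fact b)"
    using binomial_fact[OF assms] binomial_fact[of n "n + b"] by simp_all
  show ?thesis
    unfolding zsum_0_eq znorm_def choose_fact by (simp add: field_simps power2_eq_square)
qed

lemma zsum_1:
  assumes "b \<le> n"
  shows "zsum n 1 b = (-1) ^ (n + b)"
proof -
  have weight_zsum_0: "weight n c * zsum n 0 c = (-1) ^ (n + c) * real ((2*n - c) choose n)" if "c \<le> n" for c
    using that by (simp add: weight_def zsum_0)
  have "zsum n 1 b = (\<Sum>c=b..n. real (n choose (c - b)) * weight n c * zsum n 0 c)"
    using zsum_Suc[OF assms, of 0] by simp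
  also have "\<dots> = (\<Sum>c=b..n. real (n choose (c - b)) * (-1) ^ (n + c) * real ((2*n - c) choose n))"
    by (intro sum.cong refl) (simp add: weight_zsum_0 mult.assoc)
  also have "\<dots> = (-1) ^ (n + b)"
    using assms by (rule sum_alternating_choose_central)
  finally show ?thesis .
qed

lemma zsum_2:
  assumes "b \<le> n"
  shows "zsum n 2 b = tail_sum n b"
proof -
  have "zsum n 2 b = (\<Sum>c=b..n. real (n choose (c - b)) * weight n c * zsum n 1 c)"
    using zsum_Suc[OF assms, of 1] by (simp add: numeral_2_eq_2)
  also have "\<dots> = (\<Sum>c=b..n. real (n choose (c - b)) * weight n c * (-1) ^ (n + c))"
    by (intro sum.cong refl, subst zsum_1) auto
  also have "\<dots> = tail_sum n b"
    using assms by (rule sum_choose_weight_alternating)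
  finally show ?thesis .
qed

lemma residue_sum_summand_linear_weight_poly_power:
  assumes "j \<le> n"
  shows "real (n choose j) * (poly (pderiv ([:- real n, 2:] * weight_poly n ^ B)) (real j)
      + (harm (n - j) - harm j) * poly ([:- real n, 2:] * weight_poly n ^ B) (real j))
    = -2 * (real (n choose j) * real ((n + j) choose n) ^ B * real ((2*n - j) choose n) ^ B
      * ((real n / 2 - real j) * ((1 + real B) * (harm (n - j) - harm j)
          + real B * (harm (n + j) - harm (2*n - j))) - 1))"
proof -
  define Q where "Q = weight n j"
  define h :: real where "h = harm (n - j) - harm j"
  define e :: real where "e = harm (n + j) - harm (2*n - j)"
  have pderiv_eq: "pderiv ([:- real n, 2:] * weight_poly n ^ B)
      = [:- real n, 2:] * smult (real B) (weight_poly n ^ (B - 1) * pderiv (weight_poly n)) + weight_poly n ^ B * [:2:]"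
    unfolding pderiv_mult pderiv_power by (simp add: pderiv_pCons)
  have "poly (pderiv ([:- real n, 2:] * weight_poly n ^ B)) (real j)
      = (2 * real j - real n) * (real B * (Q ^ (B - 1) * (Q * (e + h)))) + 2 * Q ^ B"
    unfolding pderiv_eq poly_add poly_mult poly_smult poly_power poly_weight_poly[OF assms]
      poly_pderiv_weight_poly[OF assms]
    by (simp add: Q_def e_def h_def algebra_simps)
  also have "real B * (Q ^ (B - 1) * (Q * (e + h))) = real B * Q ^ B * (e + h)"
    by (cases B) simp_all
  finally have pderiv_at_j: "poly (pderiv ([:- real n, 2:] * weight_poly n ^ B)) (real j)
      = (2 * real j - real n) * (real B * Q ^ B * (e + h)) + 2 * Q ^ B" .
  have poly_at_j: "poly ([:- real n, 2:] * weight_poly n ^ B) (real j) = (2 * real j - real n) * Q ^ B"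
    using poly_weight_poly[OF assms] by (simp add: Q_def algebra_simps)
  have weight_power: "real (n choose j) * real ((n + j) choose n) ^ B * real ((2*n - j) choose n) ^ B
      = real (n choose j) * Q ^ B"
    by (simp add: Q_def weight_def power_mult_distrib)
  show ?thesis
    unfolding pderiv_at_j poly_at_j weight_power h_def[symmetric] e_def[symmetric] by (simp add: field_simps)
qed

lemma residue_sum_linear_weight_poly_power:
  "residue_sum n ([:- real n, 2:] * weight_poly n ^ B) = -2 * bigP n B"
proof -
  have "residue_sum n ([:- real n, 2:] * weight_poly n ^ B)
      = (\<Sum>j=0..n. -2 * (real (n choose j) * real ((n + j) choose n) ^ B * real ((2*n - j) choose n) ^ B
        * ((real n / 2 - real j) * ((1 + real B) * (harm (n - j) - harm j)
            + real B * (harm (n + j) - harm (2*n - j))) - 1)))"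
    unfolding residue_sum_def atLeast0AtMost by (intro sum.cong refl, rule residue_sum_summand_linear_weight_poly_power) simp
  also have "\<dots> = -2 * bigP n B"
    by (simp add: bigP_def sum_distrib_left)
  finally show ?thesis .
qed

lemma zsum_at_0: "zsum n B 0 = (-1) ^ (n + 1) * bigP n B"
proof -
  have sym_fall_0: "sym_fall n 0 = 1"
    by (simp add: sym_fall_def)
  show ?thesis
    unfolding zsum_def znorm_def sym_fall_0 mult_1_right residue_sum_linear_weight_poly_power by simp
qed

section \<open>Nested index tuples\<close>

lemma idx_tuples_Suc_0: "idx_tuples n (Suc 0) = {\<lambda>_. 0}"
proof (intro set_eqI iffI)
  fix i assume "i \<in> idx_tuples n (Suc 0)"
  then have "i 0 = 0" and "\<forall>k\<ge>1. i k = 0"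
    by (simp_all add: idx_tuples_def)
  then have "i k = 0" for k
    by (cases k) simp_all
  then show "i \<in> {\<lambda>_. 0}"
    by auto
qed (simp add: idx_tuples_def)

lemma idx_tuples_SucD:
  assumes "i \<in> idx_tuples n (Suc (Suc m))"
  shows "i(Suc m := 0) \<in> idx_tuples n (Suc m)" and "i m \<le> i (Suc m)" and "i (Suc m) \<le> n"
proof -
  have "\<forall>k\<in>{1..Suc m}. i (k - 1) \<le> i k"
    using assms by (simp add: idx_tuples_def)
  then show "i m \<le> i (Suc m)"
    by (metis atLeastAtMost_iff diff_Suc_1 le_add1 le_refl plus_1_eq_Suc)
  with assms show "i(Suc m := 0) \<in> idx_tuples n (Suc m)" and "i (Suc m) \<le> n"
    by (auto simp: idx_tuples_def)
qed

lemma idx_tuples_updI: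
  assumes "i \<in> idx_tuples n (Suc m)" "i m \<le> a" "a \<le> n"
  shows "i(Suc m := a) \<in> idx_tuples n (Suc (Suc m))"
  using assms by (auto simp: idx_tuples_def le_Suc_eq)

lemma idx_tuples_bound: "i \<in> idx_tuples n (Suc m) \<Longrightarrow> i m \<le> n"
  by (simp add: idx_tuples_def)

lemma idx_tuples_Suc_eq_image:
  "idx_tuples n (Suc (Suc m)) = (\<lambda>(i, a). i(Suc m := a)) ` (SIGMA i:idx_tuples n (Suc m). {i m..n})"
proof
  show "idx_tuples n (Suc (Suc m)) \<subseteq> (\<lambda>(i, a). i(Suc m := a)) ` (SIGMA i:idx_tuples n (Suc m). {i m..n})"
  proof
    fix i assume i: "i \<in> idx_tuples n (Suc (Suc m))"
    then have "(i(Suc m := 0), i (Suc m)) \<in> (SIGMA i:idx_tuples n (Suc m). {i m..n})"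
      using idx_tuples_SucD[OF i] by auto
    then show "i \<in> (\<lambda>(i, a). i(Suc m := a)) ` (SIGMA i:idx_tuples n (Suc m). {i m..n})"
      by (auto intro!: image_eqI[where x = "(i(Suc m := 0), i (Suc m))"])
  qed
  show "(\<lambda>(i, a). i(Suc m := a)) ` (SIGMA i:idx_tuples n (Suc m). {i m..n}) \<subseteq> idx_tuples n (Suc (Suc m))"
    by (auto intro: idx_tuples_updI)
qed

lemma finite_idx_tuples: "finite (idx_tuples n (Suc m))"
  by (induction m) (simp_all add: idx_tuples_Suc_0 idx_tuples_Suc_eq_image)

lemma sum_idx_tuples_Suc:
  "(\<Sum>i\<in>idx_tuples n (Suc (Suc m)). g i) = (\<Sum>i\<in>idx_tuples n (Suc m). \<Sum>a=i m..n. g (i(Suc m := a)))"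
proof -
  have "inj_on (\<lambda>(i, a). i(Suc m := a)) (SIGMA i:idx_tuples n (Suc m). {i m..n})"
  proof (rule inj_onI, clarsimp)
    fix i a i' a'
    assume "i \<in> idx_tuples n (Suc m)" "i' \<in> idx_tuples n (Suc m)" and eq: "i(Suc m := a) = i'(Suc m := a')"
    then have "i = i(Suc m := 0)" and "i' = i'(Suc m := 0)"
      by (auto simp: idx_tuples_def)
    with eq show "i = i' \<and> a = a'"
      by (metis fun_upd_eqD fun_upd_upd)
  qed
  then show ?thesis
    by (simp add: idx_tuples_Suc_eq_image sum.reindex sum.Sigma finite_idx_tuples prod.case_distrib)
qed

definition chain_weight :: "nat \<Rightarrow> (nat \<Rightarrow> nat) \<Rightarrow> nat \<Rightarrow> real" where
  "chain_weight n i m = (\<Prod>k=1..m. real (n choose (i k - i (k - 1))) * weight n (i k))"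

lemma chain_weight_upd:
  "chain_weight n (i(Suc m := a)) (Suc m) = chain_weight n i m * (real (n choose (a - i m)) * weight n a)"
proof -
  have "(\<Prod>k=1..m. real (n choose ((i(Suc m := a)) k - (i(Suc m := a)) (k - 1))) * weight n ((i(Suc m := a)) k))
      = chain_weight n i m"
    unfolding chain_weight_def by (intro prod.cong) auto
  then show ?thesis
    unfolding chain_weight_def by simp
qed

lemma sum_chain_weight_zsum:
  "(\<Sum>i\<in>idx_tuples n (Suc m). chain_weight n i m * zsum n M (i m)) = zsum n (M + m) 0"
proof (induction m arbitrary: M)
  case 0
  then show ?case
    by (simp add: idx_tuples_Suc_0 chain_weight_def)
next
  case (Suc m)
  have "(\<Sum>i\<in>idx_tuples n (Suc (Suc m)). chain_weight n i (Suc m) * zsum n M (i (Suc m)))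
      = (\<Sum>i\<in>idx_tuples n (Suc m). chain_weight n i m
          * (\<Sum>a=i m..n. real (n choose (a - i m)) * weight n a * zsum n M a))"
    by (simp add: sum_idx_tuples_Suc chain_weight_upd sum_distrib_left mult_ac)
  also have "\<dots> = (\<Sum>i\<in>idx_tuples n (Suc m). chain_weight n i m * zsum n (Suc M) (i m))"
    by (intro sum.cong refl) (simp add: zsum_Suc idx_tuples_bound)
  also have "\<dots> = zsum n (M + Suc m) 0"
    using Suc.IH[of "Suc M"] by simp
  finally show ?case .
qed

lemma smallp_eq_sum_chain_weight:
  "real_of_int (smallp n (Suc (Suc m)))
    = (\<Sum>i\<in>idx_tuples n (Suc m). chain_weight n i m * tail_sum n (i m))"
proof -
  define f where "f i = (-1) ^ (i (Suc m) + i m) * real ((3*n + 1) choose (n - i (Suc m)))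
      * real ((n + i (Suc m) - i m) choose n) * real ((n + i (Suc m)) choose n)
      * (\<Prod>k=1..m. real (n choose (i k - i (k - 1))) * real ((2*n - i k) choose n) * real ((n + i k) choose n))"
    for i :: "nat \<Rightarrow> nat"
  have "real_of_int (smallp n (Suc (Suc m))) = (\<Sum>i\<in>idx_tuples n (Suc (Suc m)). f i)"
    by (simp add: smallp_def f_def)
  also have "\<dots> = (\<Sum>i\<in>idx_tuples n (Suc m). \<Sum>a=i m..n. f (i(Suc m := a)))"
    by (rule sum_idx_tuples_Suc)
  also have "\<dots> = (\<Sum>i\<in>idx_tuples n (Suc m). chain_weight n i m * tail_sum n (i m))"
  proof (intro sum.cong refl)
    fix i
    have "(\<Prod>k=1..m. real (n choose ((i(Suc m := a)) k - (i(Suc m := a)) (k - 1)))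
        * real ((2*n - (i(Suc m := a)) k) choose n) * real ((n + (i(Suc m := a)) k) choose n))
        = chain_weight n i m" for a
      unfolding chain_weight_def weight_def by (intro prod.cong) (auto simp: mult_ac)
    then have "f (i(Suc m := a)) = chain_weight n i m * ((-1) ^ (a + i m) * real ((3*n + 1) choose (n - a))
        * real ((n + a - i m) choose n) * real ((n + a) choose n))" for a
      unfolding f_def by (simp add: mult_ac)
    then show "(\<Sum>a=i m..n. f (i(Suc m := a))) = chain_weight n i m * tail_sum n (i m)"
      by (simp add: tail_sum_def sum_distrib_left add.commute)
  qed
  finally show ?thesis .
qed

theorem proposition4:
  fixes n B :: nat
  assumes "B \<ge> 2"
  shows "bigP n B = (-1) ^ (n + 1) * real_of_int (smallp n B)"
proof -
  obtain m where B: "B = Suc (Suc m)"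
    using assms by (metis add_2_eq_Suc le_Suc_ex)
  have "real_of_int (smallp n B) = (\<Sum>i\<in>idx_tuples n (Suc m). chain_weight n i m * tail_sum n (i m))"
    unfolding B by (rule smallp_eq_sum_chain_weight)
  also have "\<dots> = (\<Sum>i\<in>idx_tuples n (Suc m). chain_weight n i m * zsum n 2 (i m))"
    by (intro sum.cong refl) (simp add: zsum_2 idx_tuples_bound)
  also have "\<dots> = zsum n B 0"
    unfolding sum_chain_weight_zsum B by simp
  also have "\<dots> = (-1) ^ (n + 1) * bigP n B"
    by (rule zsum_at_0)
  finally show ?thesis
    by simp
qed

end
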